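(* Let $\mathcal H_A,\mathcal H_B$ be finite-dimensional complex Hilbert spaces and let $\rho$ be a separable density matrix on $\mathcal H_A\otimes\mathcal H_B$ with full rank, $\mathcal R(\rho)=\dim(\mathcal H_A\otimes\mathcal H_B)$. If $\rho$ lies on the boundary of the set of PPT states, then $\mathcal R(\rho)>\mathcal R(\rho^{T_B})$.
   Context: $\rho^{T_B}=(\mathbf 1_A\otimes T)\rho$ is the partial transpose, with $T$ transposition in a chosen basis of $\mathcal H_B$. The set of PPT states is $\{\rho\ \text{density matrix}:\rho^{T_B}\ge 0\}$, a closed convex subset of the set of density matrices; its boundary is taken relative to the set of density matrices (so boundary points are arbitrarily close to density matrices whose partial transpose has a negative eigenvalue). $\mathcal R(\cdot)$ denotes the rank. $\rho$ is separable if it is a convex combination of pure product states $|\psi\rangle\langle\psi|\otimes|\phi\rangle\langle\phi|$. *)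

theory Defs
  imports "HOL-Analysis.Analysis"
begin

text \<open>Bipartite system: H_A = complex^'a, H_B = complex^'b (finite index types, i.e.
  finite-dimensional Hilbert spaces with a chosen orthonormal basis).\<close>

type_synonym ('a, 'b) bimat = "complex ^ ('a \<times> 'b) ^ ('a \<times> 'b)"

definition psd :: "complex ^ 'n ^ 'n \<Rightarrow> bool" where
  "psd M \<longleftrightarrow> (\<forall>x :: complex ^ 'n.
     let q = (\<Sum>i\<in>UNIV. cnj (x $ i) * (M *v x) $ i) in Im q = 0 \<and> Re q \<ge> 0)"

definition density_matrix :: "complex ^ 'n ^ 'n \<Rightarrow> bool" where
  "density_matrix M \<longleftrightarrow> psd M \<and> (\<Sum>i\<in>UNIV. M $ i $ i) = 1"

definition partial_transpose :: "('a::finite, 'b::finite) bimat \<Rightarrow> ('a, 'b) bimat" where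
  "partial_transpose \<rho> = (\<chi> r c. \<rho> $ (fst r, snd c) $ (fst c, snd r))"

definition product_state :: "complex ^ 'a \<Rightarrow> complex ^ 'b \<Rightarrow> ('a::finite, 'b::finite) bimat" where
  "product_state \<psi> \<phi> =
     (\<chi> r c. \<psi> $ fst r * cnj (\<psi> $ fst c) * (\<phi> $ snd r * cnj (\<phi> $ snd c)))"

definition pure_product_states :: "('a::finite, 'b::finite) bimat set" where
  "pure_product_states = {product_state \<psi> \<phi> | \<psi> \<phi>. norm \<psi> = 1 \<and> norm \<phi> = 1}"

definition separable :: "('a::finite, 'b::finite) bimat \<Rightarrow> bool" where
  "separable \<rho> \<longleftrightarrow> \<rho> \<in> convex hull pure_product_states"

definition density_matrices :: "('a::finite, 'b::finite) bimat set" where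
  "density_matrices = {\<rho>. density_matrix \<rho>}"

definition PPT_states :: "('a::finite, 'b::finite) bimat set" where
  "PPT_states = {\<rho>. density_matrix \<rho> \<and> psd (partial_transpose \<rho>)}"

text \<open>Boundary of the PPT set relative to the set of density matrices: PPT states that are
  limits of density matrices whose partial transpose is not positive semidefinite.\<close>
definition PPT_boundary :: "('a::finite, 'b::finite) bimat set" where
  "PPT_boundary = PPT_states \<inter> closure (density_matrices - PPT_states)"

end

theory Submission
  imports Defs
begin

text \<open>Suppose the rank of \<rho>^T_B were not smaller than the full rank of \<rho>. Then the positive
  semidefinite matrix \<rho>^T_B is invertible, hence positive definite, so by compactness of the
  unit sphere its Hermitian form is bounded below by m \<parallel>x\<parallel>^2 for some m > 0. Partial
  transposition only permutes matrix entries, so for every density matrix \<sigma> close to \<rho> the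
  Hermitian form of \<sigma>^T_B differs from that of \<rho>^T_B by at most m \<parallel>x\<parallel>^2; thus \<sigma> is PPT, and
  \<rho> is an interior point of the PPT set rather than a boundary point.\<close>

lemma rank_le_card_columns: "rank (A :: 'a::field^'n^'m) \<le> CARD('n)"
  unfolding row_rank_def_gen by (rule dim_subset_UNIV_cart_gen)

lemma full_rank_mult_vector_eq_0:
  fixes A :: "'a::field^'n^'m"
  assumes "rank A = CARD('n)" and "A *v x = 0"
  shows "x = 0"
proof -
  have "vec.span (rows A) = UNIV"
    using assms(1) unfolding row_rank_def_gen
    by (simp add: vec.dim_eq_full [symmetric] card_cart_basis vec.dimension_def)
  then obtain B :: "'a^'m^'n" where "B ** A = mat 1"
    using matrix_left_invertible_span_rows_gen by blast
  then have "x = B *v (A *v x)" by (simp add: matrix_vector_mul_assoc)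
  then show ?thesis using assms(2) by simp
qed

lemma nonpos_if_le_quadratic:
  fixes b q :: real
  assumes "\<And>t. 0 < t \<Longrightarrow> t * b \<le> t\<^sup>2 * q"
  shows "b \<le> 0"
proof (rule field_le_epsilon)
  fix e :: real
  assume "0 < e"
  define t where "t = e / (\<bar>q\<bar> + 1)"
  have "0 < t" using \<open>0 < e\<close> by (simp add: t_def)
  then have "b \<le> t * q" using assms[of t] by (simp add: power2_eq_square mult.assoc)
  also have "\<dots> \<le> t * \<bar>q\<bar>" using \<open>0 < t\<close> by (simp add: mult_left_mono)
  also have "\<dots> \<le> e" using \<open>0 < e\<close> unfolding t_def by (simp add: field_simps)
  finally show "b \<le> 0 + e" by simp
qed

definition sesq_form :: "complex^'n^'m \<Rightarrow> complex^'m \<Rightarrow> complex^'n \<Rightarrow> complex" where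
  "sesq_form M y x = (\<Sum>i\<in>UNIV. \<Sum>j\<in>UNIV. cnj (y$i) * M$i$j * x$j)"

definition hermitian :: "complex^'n^'n \<Rightarrow> bool" where
  "hermitian M \<longleftrightarrow> (\<forall>i j. M$i$j = cnj (M$j$i))"

lemma sesq_form_eq_sum_mult_vector: "sesq_form M y x = (\<Sum>i\<in>UNIV. cnj (y$i) * (M *v x)$i)"
  by (simp add: sesq_form_def matrix_vector_mult_def sum_distrib_left mult.assoc)

lemma psd_iff_sesq_form:
  "psd M \<longleftrightarrow> (\<forall>x. Im (sesq_form M x x) = 0 \<and> 0 \<le> Re (sesq_form M x x))"
  unfolding psd_def Let_def sesq_form_eq_sum_mult_vector ..

lemma sesq_form_add_left: "sesq_form M (y + z) x = sesq_form M y x + sesq_form M z x"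
  by (simp add: sesq_form_def distrib_left distrib_right sum.distrib)

lemma sesq_form_add_right: "sesq_form M y (x + z) = sesq_form M y x + sesq_form M y z"
  by (simp add: sesq_form_def distrib_left distrib_right sum.distrib)

lemma sesq_form_diff_left: "sesq_form M (y - z) x = sesq_form M y x - sesq_form M z x"
  by (simp add: sesq_form_def algebra_simps sum_subtractf)

lemma sesq_form_diff_right: "sesq_form M y (x - z) = sesq_form M y x - sesq_form M y z"
  by (simp add: sesq_form_def algebra_simps sum_subtractf)

lemma sesq_form_scale_left: "sesq_form M (c *s y) x = cnj c * sesq_form M y x"
  by (simp add: sesq_form_def sum_distrib_left mult.assoc)

lemma sesq_form_scale_right: "sesq_form M y (c *s x) = c * sesq_form M y x"
  by (simp add: sesq_form_def sum_distrib_left mult.assoc mult.left_commute)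

lemma sesq_form_scaleR: "sesq_form M (r *\<^sub>R y) (r *\<^sub>R x) = of_real (r * r) * sesq_form M y x"
proof -
  have scaleR_eq: "r *\<^sub>R v = complex_of_real r *s v" for v :: "complex^'k"
    unfolding vec_eq_iff vector_scaleR_component vector_smult_component
    by (simp add: scaleR_conv_of_real)
  show ?thesis by (simp add: scaleR_eq sesq_form_scale_left sesq_form_scale_right)
qed

lemma sesq_form_diff_matrix: "sesq_form (A - B) y x = sesq_form A y x - sesq_form B y x"
  by (simp add: sesq_form_def algebra_simps sum_subtractf)

lemma sesq_form_axis: "sesq_form M (axis i 1) (axis j 1) = M$i$j"
proof -
  have "M *v axis j 1 = (\<chi> k. M$k$j)"
    by (simp add: matrix_vector_mult_def axis_def if_distrib cong: if_cong)
  then show ?thesis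
    by (simp add: sesq_form_eq_sum_mult_vector axis_def if_distrib[of cnj]
        if_distrib[of "\<lambda>a. a * _"] cong: if_cong)
qed

lemma hermitian_sesq_form_swap:
  assumes "hermitian M"
  shows "sesq_form M y x = cnj (sesq_form M x y)"
proof -
  have entry: "cnj (M$j$i) = M$i$j" for i j
    using assms unfolding hermitian_def by metis
  have "sesq_form M y x = (\<Sum>j\<in>UNIV. \<Sum>i\<in>UNIV. cnj (y$i) * M$i$j * x$j)"
    unfolding sesq_form_def by (rule sum.swap)
  also have "\<dots> = (\<Sum>j\<in>UNIV. \<Sum>i\<in>UNIV. cnj (cnj (x$j) * M$j$i * y$i))"
    by (simp add: entry mult.commute mult.left_commute)
  also have "\<dots> = cnj (sesq_form M x y)" by (simp add: sesq_form_def)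
  finally show ?thesis .
qed

lemma hermitian_imp_sesq_form_diag_real:
  "hermitian M \<Longrightarrow> Im (sesq_form M x x) = 0"
  using hermitian_sesq_form_swap[of M x x] by (simp add: complex_eq_iff)

lemma psd_imp_hermitian:
  assumes "psd M"
  shows "hermitian M"
  unfolding hermitian_def
proof (intro allI)
  fix i j
  let ?e = "\<lambda>k. axis k (1::complex)"
  have real_diag: "Im (sesq_form M x x) = 0" for x using assms psd_iff_sesq_form by blast
  have "Im (M$i$i) = 0" "Im (M$j$j) = 0"
    using real_diag[of "?e i"] real_diag[of "?e j"] by (simp_all add: sesq_form_axis)
  moreover have "Im (sesq_form M (?e i + ?e j) (?e i + ?e j)) = 0"
    and "Im (sesq_form M (?e i + \<i> *s ?e j) (?e i + \<i> *s ?e j)) = 0"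
    by (rule real_diag)+
  ultimately have "Im (M$i$j + M$j$i) = 0" "Re (M$i$j - M$j$i) = 0"
    by (simp_all add: sesq_form_add_left sesq_form_add_right sesq_form_scale_left
        sesq_form_scale_right sesq_form_axis)
  then show "M$i$j = cnj (M$j$i)" by (simp add: complex_eq_iff)
qed

lemma hermitian_partial_transpose: "hermitian \<rho> \<Longrightarrow> hermitian (partial_transpose \<rho>)"
  unfolding hermitian_def partial_transpose_def vec_lambda_beta by blast

lemma sesq_form_mult_vector_left: "sesq_form M (M *v x) x = of_real ((norm (M *v x))\<^sup>2)"
proof -
  have "(norm (M *v x))\<^sup>2 = (\<Sum>i\<in>UNIV. (cmod ((M *v x)$i))\<^sup>2)"
    by (simp add: norm_vec_def L2_set_def sum_nonneg)
  then show ?thesis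
    unfolding sesq_form_eq_sum_mult_vector
    by (simp only: of_real_sum complex_norm_square mult.commute)
qed

text \<open>Positivity of the form at x - t M x gives 2 \<parallel>M x\<parallel>^2 \<le> t \<langle>M x, M (M x)\<rangle> for all t > 0.\<close>
lemma psd_sesq_form_eq_0_imp_kernel:
  assumes "psd M" and "sesq_form M x x = 0"
  shows "M *v x = 0"
proof -
  define y where "y = M *v x"
  define b where "b = (norm y)\<^sup>2"
  have yx: "sesq_form M y x = of_real b"
    unfolding y_def b_def by (rule sesq_form_mult_vector_left)
  have xy: "sesq_form M x y = of_real b"
    using hermitian_sesq_form_swap[OF psd_imp_hermitian[OF assms(1)], of x y] yx by simp
  have "t * (2 * b) \<le> t\<^sup>2 * Re (sesq_form M y y)" if "0 < t" for t
  proof -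
    let ?z = "x - complex_of_real t *s y"
    have "sesq_form M ?z ?z =
        sesq_form M x x - of_real t * sesq_form M x y - of_real t * sesq_form M y x
        + of_real t * of_real t * sesq_form M y y"
      by (simp add: sesq_form_diff_left sesq_form_diff_right sesq_form_scale_left
          sesq_form_scale_right algebra_simps)
    then have "Re (sesq_form M ?z ?z) = t\<^sup>2 * Re (sesq_form M y y) - t * (2 * b)"
      using assms(2) xy yx by (simp add: power2_eq_square)
    moreover have "0 \<le> Re (sesq_form M ?z ?z)" using assms(1) psd_iff_sesq_form by blast
    ultimately show ?thesis by simp
  qed
  then have "2 * b \<le> 0" by (rule nonpos_if_le_quadratic)
  then show ?thesis by (simp add: b_def y_def)
qed

lemma psd_full_rank_imp_pos:
  assumes "psd M" and "rank M = CARD('n)" and "x \<noteq> 0"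
  shows "0 < Re (sesq_form M (x :: complex^'n) x)"
proof -
  have "Im (sesq_form M x x) = 0" and "0 \<le> Re (sesq_form M x x)"
    using assms(1) psd_iff_sesq_form by blast+
  moreover have "sesq_form M x x \<noteq> 0"
    using assms full_rank_mult_vector_eq_0 psd_sesq_form_eq_0_imp_kernel by blast
  ultimately show ?thesis by (simp add: complex_eq_iff)
qed

lemma continuous_on_sesq_form_diag: "continuous_on S (\<lambda>x. Re (sesq_form M x x))"
  unfolding sesq_form_def
  by (intro continuous_on_Re continuous_on_sum continuous_on_mult continuous_on_cnj
      continuous_on_const continuous_on_component continuous_on_id)

lemma psd_full_rank_coercive:
  fixes M :: "complex^'n^'n"
  assumes "psd M" and "rank M = CARD('n)"
  obtains m where "0 < m" and "\<And>x. m * (norm x)\<^sup>2 \<le> Re (sesq_form M x x)"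
proof -
  obtain u where u: "u \<in> sphere 0 1"
    and min: "\<And>v. v \<in> sphere 0 1 \<Longrightarrow> Re (sesq_form M u u) \<le> Re (sesq_form M v v)"
    using continuous_attains_inf[OF compact_sphere _ continuous_on_sesq_form_diag,
        of "0 :: complex^'n" 1 M]
    by auto
  define m where "m = Re (sesq_form M u u)"
  have "u \<noteq> 0" using u by auto
  then have "0 < m" unfolding m_def by (rule psd_full_rank_imp_pos[OF assms])
  moreover have "m * (norm x)\<^sup>2 \<le> Re (sesq_form M x x)" for x
  proof (cases "x = 0")
    case False
    have "m \<le> Re (sesq_form M ((1 / norm x) *\<^sub>R x) ((1 / norm x) *\<^sub>R x))"
      unfolding m_def using False by (intro min) simp
    also have "\<dots> = Re (sesq_form M x x) / (norm x)\<^sup>2"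
      by (simp add: sesq_form_scaleR power2_eq_square)
    finally show ?thesis using False by (simp add: field_simps)
  qed (simp add: sesq_form_def)
  ultimately show thesis by (rule that)
qed

lemma norm_sesq_form_le:
  fixes A :: "complex^'n^'m"
  assumes "\<And>i j. cmod (A$i$j) \<le> K"
  shows "cmod (sesq_form A y x) \<le> real CARD('m) * real CARD('n) * K * norm y * norm x"
proof -
  have "cmod (sesq_form A y x) \<le> (\<Sum>i\<in>UNIV. \<Sum>j\<in>UNIV. cmod (cnj (y$i) * A$i$j * x$j))"
    unfolding sesq_form_def by (rule order_trans[OF norm_sum sum_mono[OF norm_sum]])
  also have "\<dots> \<le> (\<Sum>i\<in>(UNIV::'m set). \<Sum>j\<in>(UNIV::'n set). norm y * K * norm x)"
    unfolding norm_mult complex_mod_cnj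
    using order_trans[OF norm_ge_zero assms] assms
    by (intro sum_mono mult_mono) (auto simp: Finite_Cartesian_Product.norm_nth_le)
  also have "\<dots> = real CARD('m) * real CARD('n) * K * norm y * norm x"
    by (simp add: mult.assoc)
  finally show ?thesis .
qed

lemma psd_if_entrywise_close_to_coercive:
  fixes P Q :: "complex^'n^'n"
  assumes "hermitian Q"
    and coercive: "\<And>x. m * (norm x)\<^sup>2 \<le> Re (sesq_form P x x)"
    and close: "\<And>i j. cmod ((Q - P)$i$j) \<le> m / (real CARD('n))\<^sup>2"
  shows "psd Q"
  unfolding psd_iff_sesq_form
proof (intro allI conjI)
  fix x
  show "Im (sesq_form Q x x) = 0" using assms(1) by (rule hermitian_imp_sesq_form_diag_real)
  have "cmod (sesq_form (Q - P) x x) \<le> m * (norm x)\<^sup>2"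
    using norm_sesq_form_le[OF close, of x x] by (simp add: power2_eq_square)
  then have "- (m * (norm x)\<^sup>2) \<le> Re (sesq_form Q x x) - Re (sesq_form P x x)"
    using abs_Re_le_cmod[of "sesq_form (Q - P) x x"] by (simp add: sesq_form_diff_matrix)
  with coercive[of x] show "0 \<le> Re (sesq_form Q x x)" by simp
qed

lemma partial_transpose_diff:
  "partial_transpose (A - B) = partial_transpose A - partial_transpose B"
  by (simp add: partial_transpose_def vec_eq_iff)

lemma norm_partial_transpose_nth_le: "cmod (partial_transpose A $ r $ c) \<le> norm A"
  unfolding partial_transpose_def vec_lambda_beta
  by (rule order_trans[OF Finite_Cartesian_Product.norm_nth_le Finite_Cartesian_Product.norm_nth_le])

lemma full_rank_partial_transpose_not_PPT_boundary:
  fixes \<rho> :: "('a::finite, 'b::finite) bimat"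
  assumes "\<rho> \<in> PPT_states" and "rank (partial_transpose \<rho>) = CARD('a \<times> 'b)"
  shows "\<rho> \<notin> PPT_boundary"
proof
  assume "\<rho> \<in> PPT_boundary"
  let ?P = "partial_transpose \<rho>"
  have "psd ?P" using assms(1) by (simp add: PPT_states_def)
  then obtain m where "0 < m" and coercive: "\<And>x. m * (norm x)\<^sup>2 \<le> Re (sesq_form ?P x x)"
    using psd_full_rank_coercive assms(2) by blast
  then have "0 < m / (real CARD('a \<times> 'b))\<^sup>2" by simp
  then obtain \<sigma> where \<sigma>: "\<sigma> \<in> density_matrices - PPT_states"
    and near: "dist \<sigma> \<rho> < m / (real CARD('a \<times> 'b))\<^sup>2"
    using \<open>\<rho> \<in> PPT_boundary\<close> closure_approachable unfolding PPT_boundary_def by blast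
  have "density_matrix \<sigma>" using \<sigma> by (simp add: density_matrices_def)
  have "psd (partial_transpose \<sigma>)"
  proof (rule psd_if_entrywise_close_to_coercive[OF _ coercive])
    show "hermitian (partial_transpose \<sigma>)"
      using \<open>density_matrix \<sigma>\<close>
      by (simp add: density_matrix_def psd_imp_hermitian hermitian_partial_transpose)
    show "cmod ((partial_transpose \<sigma> - ?P)$r$c) \<le> m / (real CARD('a \<times> 'b))\<^sup>2" for r c
      using norm_partial_transpose_nth_le[of "\<sigma> - \<rho>" r c] near
      by (simp add: partial_transpose_diff dist_norm)
  qed
  with \<open>density_matrix \<sigma>\<close> \<sigma> show False by (simp add: PPT_states_def)
qed

theorem lemma2:
  fixes \<rho> :: "('a::finite, 'b::finite) bimat"
  assumes "density_matrix \<rho>"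
    and "separable \<rho>"
    and "rank \<rho> = CARD('a \<times> 'b)"
    and "\<rho> \<in> PPT_boundary"
  shows "rank \<rho> > rank (partial_transpose \<rho>)"
proof (rule ccontr)
  assume "\<not> rank \<rho> > rank (partial_transpose \<rho>)"
  then have "rank (partial_transpose \<rho>) = CARD('a \<times> 'b)"
    using assms(3) rank_le_card_columns[of "partial_transpose \<rho>"] by simp
  moreover have "\<rho> \<in> PPT_states" using assms(4) by (simp add: PPT_boundary_def)
  ultimately show False
    using full_rank_partial_transpose_not_PPT_boundary assms(4) by blast
qed

end
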